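(* Let $s,t,r\in\mathbb{N}$ with $s\leqslant rt$ and $r\leqslant st$. The Lie group $U(r)$ acts smoothly, freely and properly on the manifold $V_{s,t,r}$ by $U\cdot V=(U\otimes I)V$, where $U\in U(r)$, $V\in V_{s,t,r}$ and $I$ is the $t\times t$ identity matrix (in particular, $U\cdot V\in V_{s,t,r}$).
   Context: $V_{s,t,r}$ is the set of $V=[A_1;\dots;A_r]\in\mathbb{C}^{rt\times s}$ (vertical stacking of blocks $A_i\in\mathbb{C}^{t\times s}$) with $V^{\ast}V=I$ and $A_1,\dots,A_r$ linearly independent over $\mathbb{C}$; it is a smooth embedded (open) submanifold of the Stiefel manifold $\{V\in\mathbb{C}^{rt\times s}:V^{\ast}V=I\}$. An action is free if $g\cdot p=p$ implies $g$ is the identity, and proper if $(g,p)\mapsto(g\cdot p,p)$ is a proper map. *)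

theory Defs
  imports "HOL-Analysis.Analysis"
begin

definition ctrans :: "complex^'n^'m \<Rightarrow> complex^'m^'n" where
  "ctrans A = (\<chi> i j. cnj (A $ j $ i))"

definition stiefel :: "complex^'s^'m \<Rightarrow> bool" where
  "stiefel V \<longleftrightarrow> ctrans V ** V = mat 1"

definition unitary_group :: "(complex^'r^'r) set" where
  "unitary_group = {U. ctrans U ** U = mat 1}"

text \<open>Rows of V indexed by pairs (i,k): i-th block, k-th row within the block.
  The i-th t x s block A_i of V.\<close>
definition block :: "complex^'s^('r::finite \<times> 't::finite) \<Rightarrow> 'r \<Rightarrow> complex^'s^'t" where
  "block V i = (\<chi> k j. V $ (i,k) $ j)"

definition lin_indep_C :: "('r::finite \<Rightarrow> complex^'s^'t) \<Rightarrow> bool" where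
  "lin_indep_C A \<longleftrightarrow>
     (\<forall>c :: 'r \<Rightarrow> complex. (\<Sum>i\<in>UNIV. (\<chi> k j. c i * A i $ k $ j)) = 0 \<longrightarrow> (\<forall>i. c i = 0))"

definition Vstr :: "(complex^'s^('r::finite \<times> 't::finite)) set" where
  "Vstr = {V. stiefel V \<and> lin_indep_C (block V)}"

text \<open>The action (U \<otimes> I_t) V.\<close>
definition act :: "complex^'r::finite^'r \<Rightarrow> complex^'s^('r \<times> 't::finite) \<Rightarrow> complex^'s^('r \<times> 't)" where
  "act U V = (\<chi> p j. \<Sum>l\<in>UNIV. U $ fst p $ l * V $ (l, snd p) $ j)"

text \<open>Real C-infinity smoothness on an open set, via a family of iterated
  derivatives D k x [h_1,...,h_k].\<close>
definition smooth_on :: "'a::real_normed_vector set \<Rightarrow> ('a \<Rightarrow> 'b::real_normed_vector) \<Rightarrow> bool" where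
  "smooth_on S f \<longleftrightarrow> open S \<and>
     (\<exists>D :: nat \<Rightarrow> 'a \<Rightarrow> 'a list \<Rightarrow> 'b.
        (\<forall>x\<in>S. D 0 x [] = f x) \<and>
        (\<forall>k x hs. x \<in> S \<and> length hs = k \<longrightarrow>
           ((\<lambda>y. D k y hs) has_derivative (\<lambda>h. D (Suc k) x (h # hs))) (at x)))"

end

theory Submission
  imports Defs
begin

text \<open>
  Writing \<open>A\<^sub>i\<close> for the blocks of \<open>V\<close>, the blocks of \<open>(U \<otimes> I) V\<close> are the
  combinations \<open>\<Sum>\<^sub>l U\<^sub>i\<^sub>l A\<^sub>l\<close>. Since \<open>U \<otimes> I\<close> is unitary the Stiefel condition is
  preserved, and since \<open>U\<close> is invertible so is linear independence of the blocks.
  Independence also makes the coefficients of a combination unique, so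
  \<open>(U \<otimes> I) V = V\<close> forces \<open>U = I\<close>. The action is bilinear, hence smooth, and the set
  of pairs \<open>(U, V)\<close> with \<open>((U \<otimes> I) V, V)\<close> in a compact set is closed and bounded,
  because a Stiefel matrix with \<open>n\<close> columns has Frobenius norm \<open>\<surd>n\<close>.
\<close>

definition lincomb :: "('r::finite \<Rightarrow> complex) \<Rightarrow> ('r \<Rightarrow> complex^'s^'t) \<Rightarrow> complex^'s^'t" where
  "lincomb c A = (\<chi> k j. \<Sum>i\<in>UNIV. c i * A i $ k $ j)"

lemma lin_indep_C_iff_lincomb: "lin_indep_C A \<longleftrightarrow> (\<forall>c. lincomb c A = 0 \<longrightarrow> (\<forall>i. c i = 0))"
  by (simp add: lin_indep_C_def lincomb_def vec_eq_iff sum_component fun_eq_iff)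

lemma lincomb_diff: "lincomb c A - lincomb d A = lincomb (\<lambda>i. c i - d i) A"
  by (simp add: lincomb_def vec_eq_iff left_diff_distrib sum_subtractf)

lemma lin_indep_C_lincomb_unique:
  assumes "lin_indep_C A" "lincomb c A = lincomb d A"
  shows "c = d"
  using assms lincomb_diff[of c A d] by (auto simp: lin_indep_C_iff_lincomb fun_eq_iff)

lemma lincomb_lincomb:
  "lincomb c (\<lambda>i. lincomb (\<lambda>l. U $ i $ l) A) = lincomb (\<lambda>l. \<Sum>i\<in>UNIV. c i * U $ i $ l) A"
proof -
  have "(\<Sum>i\<in>UNIV. c i * (\<Sum>l\<in>UNIV. U $ i $ l * A l $ k $ j))
      = (\<Sum>l\<in>UNIV. (\<Sum>i\<in>UNIV. c i * U $ i $ l) * A l $ k $ j)" for k j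
    by (simp add: sum_distrib_left sum_distrib_right mult.assoc, rule sum.swap)
  then show ?thesis by (simp add: lincomb_def vec_eq_iff)
qed

lemma lin_indep_C_lincomb_right_invertible:
  assumes indep: "lin_indep_C A" and inv: "U ** W = mat 1"
  shows "lin_indep_C (\<lambda>i. lincomb (\<lambda>l. U $ i $ l) A)"
  unfolding lin_indep_C_iff_lincomb
proof (intro allI impI)
  fix c m
  assume "lincomb c (\<lambda>i. lincomb (\<lambda>l. U $ i $ l) A) = 0"
  then have cU: "(\<Sum>i\<in>UNIV. c i * U $ i $ l) = 0" for l
    using indep by (auto simp: lincomb_lincomb lin_indep_C_iff_lincomb)
  have "c m = (\<Sum>i\<in>UNIV. c i * (U ** W) $ i $ m)"
    by (simp add: inv mat_def if_distrib cong: if_cong)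
  also have "\<dots> = (\<Sum>l\<in>UNIV. (\<Sum>i\<in>UNIV. c i * U $ i $ l) * W $ l $ m)"
    by (simp add: matrix_matrix_mult_def sum_distrib_left sum_distrib_right mult.assoc,
        rule sum.swap)
  finally show "c m = 0" by (simp add: cU)
qed

lemma block_act: "block (act U V) i = lincomb (\<lambda>l. U $ i $ l) (block V)"
  by (simp add: block_def act_def lincomb_def)

lemma block_eq_lincomb_mat: "block V i = lincomb (\<lambda>l. mat 1 $ i $ l) (block V)"
  by (simp add: lincomb_def mat_def vec_eq_iff if_distrib[of "\<lambda>x. x * _"] cong: if_cong)

text \<open>\<open>kron_id U\<close> is \<open>U \<otimes> I\<^sub>t\<close>, with rows and columns indexed as in \<open>block\<close>.\<close>

definition kron_id :: "complex^'r::finite^'r \<Rightarrow> complex^('r \<times> 't::finite)^('r \<times> 't)" where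
  "kron_id U = (\<chi> p q. if snd p = snd q then U $ fst p $ fst q else 0)"

lemma sum_kron_id_left:
  "(\<Sum>q\<in>UNIV. kron_id U $ p $ q * f q) = (\<Sum>l\<in>UNIV. U $ fst p $ l * f (l, snd p))"
  by (simp add: kron_id_def UNIV_Times_UNIV[symmetric] sum.cartesian_product'
      if_distrib[of "\<lambda>x. x * _"] sum.delta del: UNIV_Times_UNIV cong: if_cong)

lemma act_eq_kron_id_mult: "act U V = kron_id U ** V"
  by (simp add: act_def matrix_matrix_mult_def vec_eq_iff sum_kron_id_left)

lemma ctrans_matrix_mult: "ctrans (A ** B) = ctrans B ** ctrans A"
  by (simp add: ctrans_def matrix_matrix_mult_def vec_eq_iff cnj_sum mult.commute)

lemma ctrans_kron_id: "ctrans (kron_id U) = kron_id (ctrans U)"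
  by (simp add: ctrans_def kron_id_def vec_eq_iff)

lemma kron_id_mult: "kron_id A ** kron_id B = kron_id (A ** B)"
  by (simp add: matrix_matrix_mult_def vec_eq_iff sum_kron_id_left) (simp add: kron_id_def)

lemma kron_id_mat_1: "kron_id (mat 1) = mat 1"
  by (auto simp: kron_id_def mat_def vec_eq_iff prod_eq_iff)

lemma stiefel_act:
  assumes "U \<in> unitary_group" "stiefel V"
  shows "stiefel (act U V)"
proof -
  have "ctrans (act U V) ** act U V = ctrans V ** (kron_id (ctrans U ** U) ** V)"
    by (simp add: act_eq_kron_id_mult ctrans_matrix_mult ctrans_kron_id matrix_mul_assoc
        flip: kron_id_mult)
  then show ?thesis
    using assms by (simp add: stiefel_def unitary_group_def kron_id_mat_1)
qed

lemma lin_indep_C_block_act: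
  assumes "U \<in> unitary_group" "lin_indep_C (block V)"
  shows "lin_indep_C (block (act U V))"
proof -
  have "U ** ctrans U = mat 1"
    using assms(1) matrix_left_right_inverse by (auto simp: unitary_group_def)
  then show ?thesis
    using lin_indep_C_lincomb_right_invertible[OF assms(2)] by (simp add: block_act[abs_def])
qed

lemma act_eq_self_imp_mat_1:
  assumes "lin_indep_C (block V)" "act U V = V"
  shows "U = mat 1"
proof -
  have "(\<lambda>l. U $ i $ l) = (\<lambda>l. mat 1 $ i $ l)" for i
    using lin_indep_C_lincomb_unique[OF assms(1)] block_act[of U V i]
      block_eq_lincomb_mat[of V i] assms(2) by metis
  then show ?thesis by (simp add: vec_eq_iff fun_eq_iff)
qed

lemma bounded_bilinear_act:
  "bounded_bilinear (act :: complex^'r::finite^'r \<Rightarrow> complex^'s::finite^('r \<times> 't::finite) \<Rightarrow> _)"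
  by (rule bilinear_conv_bounded_bilinear[THEN iffD1])
    (auto intro!: linearI simp: bilinear_def vec_eq_iff act_def algebra_simps sum.distrib
      scaleR_sum_right)

lemma bounded_bilinear_smooth_on:
  assumes "bounded_bilinear f"
  shows "smooth_on UNIV (\<lambda>(x, y). f x y)"
proof -
  interpret f: bounded_bilinear f by (rule assms)
  define D where "D k z hs =
    (case k of
      0 \<Rightarrow> f (fst z) (snd z)
    | Suc 0 \<Rightarrow> f (fst (hs ! 0)) (snd z) + f (fst z) (snd (hs ! 0))
    | Suc (Suc 0) \<Rightarrow> f (fst (hs ! 0)) (snd (hs ! 1)) + f (fst (hs ! 1)) (snd (hs ! 0))
    | _ \<Rightarrow> 0)" for k z hs
  have "((\<lambda>z. D (length hs) z hs) has_derivative (\<lambda>h. D (Suc (length hs)) x (h # hs))) (at x)"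
    for x hs
  proof -
    consider "length hs = 0" | "length hs = 1" | "length hs = 2" | "length hs \<ge> 3"
      by linarith
    then show ?thesis
    proof cases
      case 1
      have "((\<lambda>z. f (fst z) (snd z)) has_derivative (\<lambda>h. f (fst x) (snd h) + f (fst h) (snd x)))
          (at x)"
        by (rule f.FDERIV has_derivative_fst has_derivative_snd has_derivative_ident)+
      then show ?thesis
        unfolding 1 D_def by (simp add: add.commute)
    next
      case 2
      let ?g = "hs ! 0"
      have "bounded_linear (\<lambda>z. f (fst ?g) (snd z) + f (fst z) (snd ?g))"
        by (intro bounded_linear_add bounded_linear_compose[OF f.bounded_linear_right]
            bounded_linear_compose[OF f.bounded_linear_left] bounded_linear_fst bounded_linear_snd)
      then show ?thesis
        unfolding 2 D_def by (simp add: add.commute bounded_linear_imp_has_derivative)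
    next
      case 3
      then show ?thesis by (simp add: D_def numeral_2_eq_2)
    next
      case 4
      then have "\<exists>n. length hs = Suc (Suc (Suc n))" by presburger
      then show ?thesis by (auto simp: D_def)
    qed
  qed
  then show ?thesis
    unfolding smooth_on_def by (intro conjI open_UNIV exI[of _ D]) (auto simp: D_def)
qed

lemma power2_norm_vec:
  "norm (x :: 'a::real_normed_vector^'n::finite) ^ 2 = (\<Sum>i\<in>UNIV. norm (x $ i) ^ 2)"
  by (simp add: norm_vec_def L2_set_def sum_nonneg)

lemma stiefel_column_norm:
  assumes "stiefel A"
  shows "(\<Sum>k\<in>UNIV. norm (A $ k $ j) ^ 2) = 1"
proof -
  have "(\<Sum>k\<in>UNIV. A $ k $ j * cnj (A $ k $ j)) = 1"
    using assms by (simp add: stiefel_def vec_eq_iff ctrans_def matrix_matrix_mult_def mat_def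
        mult.commute)
  then have "complex_of_real (\<Sum>k\<in>UNIV. norm (A $ k $ j) ^ 2) = 1"
    by (simp flip: complex_norm_square)
  then show ?thesis using of_real_eq_1_iff by blast
qed

lemma norm_stiefel:
  assumes "stiefel (A :: complex^'n::finite^'m::finite)"
  shows "norm A = sqrt (real CARD('n))"
proof -
  have "norm A ^ 2 = (\<Sum>j\<in>UNIV. \<Sum>k\<in>UNIV. norm (A $ k $ j) ^ 2)"
    by (simp add: power2_norm_vec sum.swap[where A = "UNIV :: 'm set"])
  also have "\<dots> = real CARD('n)"
    by (simp add: stiefel_column_norm[OF assms])
  finally show ?thesis by (simp add: real_sqrt_unique)
qed

lemma closed_unitary_group: "closed unitary_group"
  unfolding unitary_group_def ctrans_def matrix_matrix_mult_def
  by (intro closed_Collect_eq continuous_intros)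

lemma compact_act_preimage:
  fixes K :: "((complex^'s::finite^('r::finite \<times> 't::finite)) \<times> (complex^'s^('r \<times> 't))) set"
  assumes "compact K" "K \<subseteq> Vstr \<times> Vstr"
  shows "compact {(U, V). U \<in> (unitary_group :: (complex^'r^'r) set) \<and> V \<in> Vstr \<and> (act U V, V) \<in> K}"
    (is "compact ?S")
proof -
  interpret act: bounded_bilinear "act :: complex^'r^'r \<Rightarrow> complex^'s^('r \<times> 't) \<Rightarrow> _"
    by (rule bounded_bilinear_act)
  let ?f = "\<lambda>z :: (complex^'r^'r) \<times> (complex^'s^('r \<times> 't)). (act (fst z) (snd z), snd z)"
  have S_eq: "?S = (unitary_group \<times> UNIV) \<inter> ?f -` K"
    using assms(2) by auto
  have "continuous_on UNIV ?f"
    by (intro continuous_intros act.continuous_on)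
  then have "closed ?S"
    unfolding S_eq
    by (intro closed_Int closed_Times closed_unitary_group closed_UNIV
        closed_vimage compact_imp_closed assms(1))
  moreover have "bounded ?S"
    unfolding bounded_iff
  proof (intro exI ballI)
    fix z assume "z \<in> ?S"
    then have "stiefel (fst z)" "stiefel (snd z)"
      by (auto simp: unitary_group_def Vstr_def stiefel_def)
    then show "norm z \<le> sqrt (real CARD('r)) + sqrt (real CARD('s))"
      using norm_Pair_le[of "fst z" "snd z"] by (simp add: norm_stiefel)
  qed
  ultimately show ?thesis by (simp add: compact_eq_bounded_closed)
qed

text \<open>The dimension hypotheses only ensure that \<open>V\<^sub>s\<^sub>,\<^sub>t\<^sub>,\<^sub>r\<close> is nonempty; the proof does not use them.\<close>

theorem proposition6:
  assumes "CARD('s::finite) \<le> CARD('r::finite) * CARD('t::finite)"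
      and "CARD('r) \<le> CARD('s) * CARD('t)"
  shows "(\<forall>U\<in>(unitary_group :: (complex^'r^'r) set). \<forall>V\<in>(Vstr :: (complex^'s^('r \<times> 't)) set).
            act U V \<in> Vstr)
     \<and> smooth_on UNIV (\<lambda>(U :: complex^'r^'r, V :: complex^'s^('r \<times> 't)). act U V)
     \<and> (\<forall>U\<in>(unitary_group :: (complex^'r^'r) set). \<forall>V\<in>(Vstr :: (complex^'s^('r \<times> 't)) set).
            act U V = V \<longrightarrow> U = mat 1)
     \<and> (\<forall>K :: ((complex^'s^('r \<times> 't)) \<times> (complex^'s^('r \<times> 't))) set.
            compact K \<and> K \<subseteq> Vstr \<times> Vstr \<longrightarrow>
            compact {(U, V). U \<in> (unitary_group :: (complex^'r^'r) set) \<and> V \<in> Vstr \<and> (act U V, V) \<in> K})"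
  using stiefel_act lin_indep_C_block_act act_eq_self_imp_mat_1
    bounded_bilinear_smooth_on[OF bounded_bilinear_act] compact_act_preimage
  by (auto simp: Vstr_def)

end
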